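(* Let $s\ge 2$ and $p\ge 2$ be integers and define \[G_{s,p}(x)=\frac{x(x^s-1)^p-(x^s-x)^p}{x(x-1)^p},\] which is a polynomial in $\mathbb{Z}[x]$. Then $G_{s,2}(x)$ divides $G_{s,p}(x)$ if and only if $p\equiv 2 \pmod{2(2s-1)}$.
   Context: $G_{s,p}(x)$ is (after the substitution $x=1-q$) the non-linear factor of the chromatic polynomial of the theta-graph $\Theta^{s,p}$, the graph on $2+p(s-1)$ vertices obtained from $p$ disjoint paths of length $s$ by identifying all their left-hand endpoints and all their right-hand endpoints. *)

theory Defs
  imports "HOL-Computational_Algebra.Polynomial"
begin

definition G_num :: "nat \<Rightarrow> nat \<Rightarrow> int poly" where
  "G_num s p = [:0, 1:] * ([:0, 1:] ^ s - 1) ^ p - ([:0, 1:] ^ s - [:0, 1:]) ^ p"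

definition G_den :: "nat \<Rightarrow> int poly" where
  "G_den p = [:0, 1:] * ([:0, 1:] - 1) ^ p"

text \<open>G_{s,p} = numerator / denominator (the division is exact in Z[x]).\<close>
definition G :: "nat \<Rightarrow> nat \<Rightarrow> int poly" where
  "G s p = G_num s p div G_den p"

end

theory Submission
  imports Defs "HOL-Analysis.Analysis"
begin

text \<open>Put \<open>A = 1 + x + ... + x^(s-1)\<close>, \<open>B = 1 + x + ... + x^(s-2)\<close> and
  \<open>\<Phi> = 1 + x + ... + x^(2s-2)\<close>. Then \<open>G_{s,p} = A^p - x^(p-1) B^p\<close>, \<open>G_{s,2} = \<Phi>\<close> and
  \<open>\<Phi> = A + x^s B\<close>, so modulo \<open>\<Phi>\<close> we have \<open>x^s B = -A\<close> and hence
  \<open>x^(sp) G_{s,p} = A^p (x^(sp) - (-1)^p x^(p-1))\<close>. Since \<open>x^(2s-1) = 1\<close> modulo \<open>\<Phi>\<close>,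
  the bracket vanishes modulo \<open>\<Phi>\<close> when \<open>p = 2 (mod 2(2s-1))\<close>, and \<open>x\<close> is a unit modulo \<open>\<Phi>\<close>.
  Conversely, at a primitive \<open>(2s-1)\<close>-th root of unity \<open>w\<close> we have \<open>\<Phi>(w) = 0\<close> but
  \<open>A(w) \<noteq> 0\<close>, so \<open>w^(sp) = (-1)^p w^(p-1)\<close>. Raising this to the odd power \<open>2s-1\<close> rules out
  odd \<open>p\<close>, and for \<open>p = 2m\<close> it says that \<open>2s-1\<close> divides \<open>m(2s-2) + 1 = m(2s-1) - (m-1)\<close>.\<close>

definition geom_poly :: "nat \<Rightarrow> 'a::comm_ring_1 poly" where
  "geom_poly k = (\<Sum>i<k. [:0, 1:] ^ i)"

lemma geom_poly_mult_X_minus_1: "([:0, 1:] - 1) * geom_poly k = [:0, 1:] ^ k - 1"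
  unfolding geom_poly_def by (rule power_diff_1_eq [symmetric])

lemma geom_poly_add: "geom_poly (a + b) = geom_poly a + [:0, 1:] ^ a * geom_poly b"
  by (induction b) (simp_all add: geom_poly_def power_add algebra_simps)

lemma X_minus_1_nonzero: "[:0, 1:] - 1 \<noteq> (0 :: 'a::comm_ring_1 poly)"
proof
  assume "[:0, 1:] - 1 = (0 :: 'a poly)"
  then have "coeff ([:0, 1:] - 1 :: 'a poly) 1 = 0" by simp
  then show False by simp
qed

lemma dvd_power_diff: "x - y dvd x ^ n - (y :: 'a::comm_ring_1) ^ n"
  by (simp add: power_diff_sumr2)

lemma dvd_power_mult_cancel:
  fixes a b x :: "'a::comm_ring_1"
  assumes "a dvd x ^ n - 1" and "n > 0" and "a dvd x ^ k * b"
  shows "a dvd b"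
proof -
  have "x ^ n - 1 dvd (x ^ n) ^ k - 1 ^ k" by (rule dvd_power_diff)
  then have "a dvd x ^ (n * k) - 1" using assms(1) by (simp add: power_mult dvd_trans)
  moreover have "b = x ^ ((n - 1) * k) * (x ^ k * b) - (x ^ (n * k) - 1) * b"
    \<comment> \<open>\<open>x ^ ((n - 1) * k)\<close> inverts \<open>x ^ k\<close> modulo \<open>a\<close>\<close>
  proof -
    have "(n - 1) * k + k = n * k" using \<open>n > 0\<close> by (simp add: algebra_simps)
    then show ?thesis by (simp add: algebra_simps flip: power_add)
  qed
  ultimately show ?thesis using assms(3) by (metis dvd_diff dvd_mult dvd_mult2)
qed

lemma map_poly_of_int_add:
  "map_poly of_int (p + q) = (map_poly of_int p + map_poly of_int q :: 'a::comm_ring_1 poly)"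
  by (rule poly_eqI) (simp add: coeff_map_poly)

lemma map_poly_of_int_diff:
  "map_poly of_int (p - q) = (map_poly of_int p - map_poly of_int q :: 'a::comm_ring_1 poly)"
  by (rule poly_eqI) (simp add: coeff_map_poly)

lemma map_poly_of_int_uminus:
  "map_poly of_int (- p) = (- map_poly of_int p :: 'a::comm_ring_1 poly)"
  by (rule poly_eqI) (simp add: coeff_map_poly)

lemma map_poly_of_int_mult:
  "map_poly of_int (p * q) = (map_poly of_int p * map_poly of_int q :: 'a::comm_ring_1 poly)"
  by (rule poly_eqI) (simp add: coeff_map_poly coeff_mult)

lemma map_poly_of_int_power:
  "map_poly of_int (p ^ k) = (map_poly of_int p ^ k :: 'a::comm_ring_1 poly)"
  by (induction k) (simp_all add: map_poly_of_int_mult)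

lemma map_poly_of_int_X: "map_poly of_int [:0, 1:] = ([:0, 1:] :: 'a::comm_ring_1 poly)"
  by (simp add: map_poly_pCons)

lemma map_poly_of_int_geom_poly:
  "map_poly of_int (geom_poly k) = (geom_poly k :: 'a::comm_ring_1 poly)"
  by (induction k)
    (simp_all add: geom_poly_def map_poly_of_int_add map_poly_of_int_power map_poly_of_int_X)

lemma map_poly_of_int_dvd:
  "p dvd q \<Longrightarrow> (map_poly of_int p :: 'a::comm_ring_1 poly) dvd map_poly of_int q"
  by (auto simp: map_poly_of_int_mult)

lemma poly_geom_poly_eq_0_iff:
  fixes w :: "'a::idom"
  assumes "w \<noteq> 1"
  shows "poly (geom_poly k) w = 0 \<longleftrightarrow> w ^ k = 1"
proof -
  have "(w - 1) * poly (geom_poly k) w = w ^ k - 1"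
    using arg_cong [OF geom_poly_mult_X_minus_1 [of k], of "\<lambda>P. poly P w"] by simp
  then show ?thesis using assms by auto
qed

lemma exists_primitive_root_of_unity:
  assumes "n \<ge> 1"
  shows "\<exists>w :: complex. \<forall>j. w ^ j = 1 \<longleftrightarrow> n dvd j"
proof
  let ?w = "exp (2 * of_real pi * \<i> * of_nat 1 / of_nat n) :: complex"
  show "\<forall>j. ?w ^ j = 1 \<longleftrightarrow> n dvd j"
  proof
    fix j
    have "?w ^ j = exp (2 * of_real pi * \<i> * of_nat j / of_nat n)"
      by (simp add: exp_of_nat_mult [symmetric] algebra_simps)
    then show "?w ^ j = 1 \<longleftrightarrow> n dvd j"
      using complex_root_unity_eq_1 [OF assms] by simp
  qed
qed

lemma G_eq_geom_poly:
  assumes "s \<ge> 1" and "q \<ge> 1"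
  shows "G s q = geom_poly s ^ q - [:0, 1:] ^ (q - 1) * geom_poly (s - 1) ^ q"
proof -
  define X :: "int poly" where "X = [:0, 1:]"
  obtain r where q: "q = Suc r" using \<open>q \<ge> 1\<close> by (cases q) simp_all
  have A: "X ^ s - 1 = (X - 1) * geom_poly s"
    and B: "X ^ (s - 1) - 1 = (X - 1) * geom_poly (s - 1)"
    by (simp_all add: X_def geom_poly_mult_X_minus_1)
  have "X ^ s - X = X * (X ^ (s - 1) - 1)"
    using \<open>s \<ge> 1\<close> by (simp add: algebra_simps flip: power_Suc)
  then have "G_num s q = X * (X ^ s - 1) ^ q - (X * (X ^ (s - 1) - 1)) ^ q"
    by (simp add: G_num_def X_def)
  also have "\<dots> = X * (X - 1) ^ q * (geom_poly s ^ q - X ^ (q - 1) * geom_poly (s - 1) ^ q)"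
    unfolding A B power_mult_distrib q by (simp add: algebra_simps)
  finally have "G_num s q = G_den q * (geom_poly s ^ q - X ^ (q - 1) * geom_poly (s - 1) ^ q)"
    by (simp add: G_den_def X_def)
  moreover have "G_den q \<noteq> 0"
    using X_minus_1_nonzero [where 'a = int] by (simp add: G_den_def)
  ultimately show ?thesis
    by (simp add: G_def X_def)
qed

lemma G_2_eq_geom_poly:
  assumes "s \<ge> 1"
  shows "G s 2 = geom_poly (2 * s - 1)"
proof -
  define X :: "int poly" where "X = [:0, 1:]"
  have n: "2 * s - 1 = Suc ((s - 1) + (s - 1))" and s: "s = Suc (s - 1)"
    using assms by simp_all
  have A: "(X - 1) * geom_poly s = X * X ^ (s - 1) - 1"
    and B: "(X - 1) * geom_poly (s - 1) = X ^ (s - 1) - 1"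
    and Phi: "(X - 1) * geom_poly (2 * s - 1) = X * (X ^ (s - 1)) ^ 2 - 1"
    by (simp_all only: X_def geom_poly_mult_X_minus_1 power2_eq_square)
      (subst s, simp, subst n, simp add: power_add)
  have G2: "G s 2 = geom_poly s ^ 2 - X * geom_poly (s - 1) ^ 2"
    using G_eq_geom_poly [OF assms, of 2] by (simp add: X_def)
  have "(X - 1) ^ 2 * G s 2 = ((X - 1) * geom_poly s) ^ 2 - X * ((X - 1) * geom_poly (s - 1)) ^ 2"
    unfolding G2 by (simp add: power2_eq_square algebra_simps)
  also have "\<dots> = (X - 1) * (X * (X ^ (s - 1)) ^ 2 - 1)"
    unfolding A B by (simp add: power2_eq_square algebra_simps)
  also have "\<dots> = (X - 1) ^ 2 * geom_poly (2 * s - 1)"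
    unfolding Phi [symmetric] by (simp add: power2_eq_square)
  finally show ?thesis
    using X_minus_1_nonzero [where 'a = int] by (simp add: X_def)
qed

lemma geom_poly_dvd_X_power_mult_G:
  assumes "s \<ge> 1" and "q \<ge> 1"
  shows "geom_poly (2 * s - 1) dvd [:0, 1:] ^ (s * q) * G s q
    - geom_poly s ^ q * ([:0, 1:] ^ (s * q) - (-1) ^ q * [:0, 1:] ^ (q - 1))"
proof -
  define X :: "int poly" where "X = [:0, 1:]"
  define A :: "int poly" where "A = geom_poly s"
  define B :: "int poly" where "B = geom_poly (s - 1)"
  have Phi: "geom_poly (2 * s - 1) = X ^ s * B - (- A)"
  proof -
    have "2 * s - 1 = s + (s - 1)" using assms by simp
    then show ?thesis by (simp add: geom_poly_add X_def A_def B_def)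
  qed
  have XG: "X ^ (s * q) * G s q = X ^ (s * q) * A ^ q - X ^ (q - 1) * (X ^ s * B) ^ q"
    using G_eq_geom_poly [OF assms]
    by (simp add: X_def A_def B_def power_mult_distrib power_mult right_diff_distrib
        mult.left_commute)
  have "X ^ (s * q) * G s q - A ^ q * (X ^ (s * q) - (-1) ^ q * X ^ (q - 1))
        = - (X ^ (q - 1) * ((X ^ s * B) ^ q - (- A) ^ q))"
    unfolding XG power_minus [of A] by (simp add: algebra_simps)
  moreover have "geom_poly (2 * s - 1) dvd (X ^ s * B) ^ q - (- A) ^ q"
    unfolding Phi by (rule dvd_power_diff)
  ultimately show ?thesis
    by (simp add: X_def A_def)
qed

lemma G_2_dvd_G_if_mod_eq:
  assumes "s \<ge> 2" and "p mod (2 * (2 * s - 1)) = 2 mod (2 * (2 * s - 1))"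
  shows "G s 2 dvd G s p"
proof -
  define n where "n = 2 * s - 1"
  define X :: "int poly" where "X = [:0, 1:]"
  have "n \<ge> 3" using assms(1) by (simp add: n_def)
  then have "p mod (2 * n) = 2" using assms(2) by (simp add: n_def)
  then obtain k where p: "p = 2 + 2 * n * k"
    using div_mult_mod_eq [of p "2 * n"] by (metis add.commute mult.commute)
  obtain t where s: "s = Suc t" using assms(1) by (cases s) simp_all
  define m where "m = 1 + 2 * t * k"
  have "s * p = (p - 1) + n * m"
    unfolding p m_def n_def s by (simp add: algebra_simps)
  then have "X ^ (s * p) = X ^ (p - 1) * (X ^ n) ^ m"
    by (simp only: power_add power_mult)
  moreover have "(-1) ^ p = (1 :: int poly)"
    by (simp add: p)
  ultimately have Xsp: "X ^ (s * p) - (-1) ^ p * X ^ (p - 1) = X ^ (p - 1) * ((X ^ n) ^ m - 1)"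
    by (simp only: right_diff_distrib mult_1_left mult_1_right)
  have Phi_dvd: "geom_poly n dvd X ^ n - 1"
    by (simp add: X_def flip: geom_poly_mult_X_minus_1)
  moreover have "X ^ n - 1 dvd (X ^ n) ^ m - 1"
    using dvd_power_diff [of "X ^ n" 1 m] by simp
  ultimately have "geom_poly n dvd geom_poly s ^ p * (X ^ (p - 1) * ((X ^ n) ^ m - 1))"
    by (blast intro: dvd_trans dvd_mult)
  then have "geom_poly n dvd geom_poly s ^ p * (X ^ (s * p) - (-1) ^ p * X ^ (p - 1))"
    by (simp only: Xsp)
  moreover have
    "geom_poly n dvd X ^ (s * p) * G s p - geom_poly s ^ p * (X ^ (s * p) - (-1) ^ p * X ^ (p - 1))"
  proof -
    have "s \<ge> 1" and "p \<ge> 1" using assms(1) p by simp_all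
    from geom_poly_dvd_X_power_mult_G [OF this] show ?thesis unfolding n_def X_def .
  qed
  ultimately have "geom_poly n dvd X ^ (s * p) * G s p"
    by (metis dvd_add diff_add_cancel)
  then have "geom_poly n dvd G s p"
    using Phi_dvd \<open>n \<ge> 3\<close> by (metis dvd_power_mult_cancel zero_less_numeral less_le_trans)
  then show ?thesis
    using G_2_eq_geom_poly [of s] assms(1) by (simp add: n_def)
qed

lemma mod_eq_if_primitive_root_identity:
  fixes w :: complex
  assumes prim: "\<And>j. w ^ j = 1 \<longleftrightarrow> 2 * s - 1 dvd j"
    and "s \<ge> 2" and "p \<ge> 1"
    and eq: "w ^ (s * p) = (-1) ^ p * w ^ (p - 1)"
  shows "p mod (2 * (2 * s - 1)) = 2 mod (2 * (2 * s - 1))"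
proof -
  define n where "n = 2 * s - 1"
  have "odd n" and "n \<ge> 3" using \<open>s \<ge> 2\<close> by (simp_all add: n_def)
  have wn: "w ^ n = 1" using prim by (simp add: n_def)
  then have "w \<noteq> 0" using \<open>n \<ge> 3\<close> by (auto simp: power_0_left)
  show ?thesis
  proof (cases "even p")
    case False
    have "1 = (w ^ n) ^ (s * p)" using wn by simp
    also have "\<dots> = (w ^ (s * p)) ^ n"
      by (simp flip: power_mult add: mult.commute)
    also have "\<dots> = ((-1) ^ p * w ^ (p - 1)) ^ n"
      by (simp only: eq)
    also have "\<dots> = (-1) ^ (p * n) * ((w ^ n) ^ (p - 1))"
      by (simp add: power_mult_distrib flip: power_mult) (simp add: mult.commute)
    also have "\<dots> = -1" using False \<open>odd n\<close> wn by simp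
    finally show ?thesis by simp
  next
    case True
    then obtain m where p: "p = 2 * m" ..
    with \<open>p \<ge> 1\<close> have "m \<ge> 1" by simp
    have "s * p = (p - 1) + (m * (n - 1) + 1)"
    proof -
      obtain r where m: "m = Suc r" using \<open>m \<ge> 1\<close> by (cases m) simp_all
      obtain t where s: "s = Suc t" using \<open>s \<ge> 2\<close> by (cases s) simp_all
      show ?thesis unfolding p n_def m s by (simp add: algebra_simps)
    qed
    then have "w ^ (p - 1) * w ^ (m * (n - 1) + 1) = w ^ (p - 1) * 1"
      using eq True by (simp add: power_add)
    then have "w ^ (m * (n - 1) + 1) = 1"
      using \<open>w \<noteq> 0\<close> by simp
    then have "n dvd m * (n - 1) + 1"
      using prim [of "m * (n - 1) + 1"] unfolding n_def by blast
    moreover have "m * (n - 1) + 1 + (m - 1) = n * m"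
      using \<open>m \<ge> 1\<close> \<open>n \<ge> 3\<close> by (simp add: algebra_simps)
    ultimately have "n dvd m - 1"
      by (metis dvd_add_right_iff dvd_triv_left)
    then obtain j where "m - 1 = n * j" ..
    then have "p = 2 + (2 * n) * j" using p \<open>m \<ge> 1\<close> by simp
    then show ?thesis by (simp only: n_def [symmetric] mod_mult_self2)
  qed
qed

lemma mod_eq_if_G_2_dvd_G:
  assumes "s \<ge> 2" and "p \<ge> 1" and "G s 2 dvd G s p"
  shows "p mod (2 * (2 * s - 1)) = 2 mod (2 * (2 * s - 1))"
proof -
  define n where "n = 2 * s - 1"
  define W :: "int poly" where "W = [:0, 1:] ^ (s * p) - (-1) ^ p * [:0, 1:] ^ (p - 1)"
  have "n \<ge> 3" using \<open>s \<ge> 2\<close> by (simp add: n_def)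
  then obtain w :: complex where prim: "\<And>j. w ^ j = 1 \<longleftrightarrow> n dvd j"
    using exists_primitive_root_of_unity [of n] by auto
  have "w \<noteq> 1" using prim [of 1] \<open>n \<ge> 3\<close> by auto
  have "geom_poly n dvd [:0, 1:] ^ (s * p) * G s p - geom_poly s ^ p * W"
    using geom_poly_dvd_X_power_mult_G [of s p] assms(1,2) unfolding n_def W_def by simp
  moreover have "geom_poly n dvd [:0, 1:] ^ (s * p) * G s p"
    using assms(3) G_2_eq_geom_poly [of s] assms(1) unfolding n_def by simp
  ultimately have "geom_poly n dvd
      [:0, 1:] ^ (s * p) * G s p - ([:0, 1:] ^ (s * p) * G s p - geom_poly s ^ p * W)"
    by (rule dvd_diff [rotated])
  then have "geom_poly n dvd geom_poly s ^ p * W"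
    by simp
  from map_poly_of_int_dvd [OF this]
  have "(geom_poly n :: complex poly) dvd geom_poly s ^ p * map_poly of_int W"
    by (simp only: map_poly_of_int_mult map_poly_of_int_power map_poly_of_int_geom_poly)
  then obtain k :: "complex poly" where k: "geom_poly s ^ p * map_poly of_int W = geom_poly n * k"
    by (elim dvdE)
  have "poly (geom_poly n) w = 0"
    using poly_geom_poly_eq_0_iff [OF \<open>w \<noteq> 1\<close>] prim by simp
  then have "poly (geom_poly s) w ^ p * poly (map_poly of_int W) w = 0"
    using arg_cong [OF k, of "\<lambda>P. poly P w"] by simp
  moreover have "poly (geom_poly s) w \<noteq> 0"
  proof -
    have "\<not> n dvd s" using \<open>s \<ge> 2\<close> by (auto simp: n_def dest: dvd_imp_le)
    then show ?thesis using poly_geom_poly_eq_0_iff [OF \<open>w \<noteq> 1\<close>] prim by simp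
  qed
  moreover have "poly (map_poly of_int W) w = w ^ (s * p) - (-1) ^ p * w ^ (p - 1)"
    by (simp add: W_def map_poly_of_int_diff map_poly_of_int_mult map_poly_of_int_power
        map_poly_of_int_uminus map_poly_of_int_X)
  ultimately have "w ^ (s * p) = (-1) ^ p * w ^ (p - 1)"
    by simp
  then show ?thesis
    using mod_eq_if_primitive_root_identity [of w s p] prim assms(1,2) by (simp add: n_def)
qed

theorem proposition5:
  fixes s p :: nat
  assumes "s \<ge> 2" and "p \<ge> 2"
  shows "G s 2 dvd G s p \<longleftrightarrow> p mod (2 * (2 * s - 1)) = 2 mod (2 * (2 * s - 1))"
proof
  assume "G s 2 dvd G s p"
  with assms show "p mod (2 * (2 * s - 1)) = 2 mod (2 * (2 * s - 1))"
    by (intro mod_eq_if_G_2_dvd_G) simp_all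
next
  assume "p mod (2 * (2 * s - 1)) = 2 mod (2 * (2 * s - 1))"
  with assms(1) show "G s 2 dvd G s p"
    by (rule G_2_dvd_G_if_mod_eq)
qed

end
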